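(* Let $X$ be a triangulable space, $G$ a subgroup of $\operatorname{Homeo}(X)$, $\varphi:X\to\mathbb{R}^k$ continuous, and $(\bar C,\partial)$ a $G$-chain subcomplex of the singular chain complex $(S(X),\partial)$ over a field $\mathbb{K}$ satisfying property $( * )$. Let $\bar\varphi$ be the filtering function on $\bar C$ induced by $\varphi$. Then for every $n\in\mathbb{Z}$ and every $u,v\in\mathbb{R}^k$ with $u\prec v$, the persistent Betti number $\rho^{\bar\varphi}_n(u,v)$ of $(\bar C,\partial)$ with respect to $\bar\varphi$ is finite.
   Context: Order on $\mathbb{R}^k$: $u\preceq v$ iff $u_j\le v_j$ for all $j$; $u\prec v$ iff $u_j<v_j$ for all $j$. $X^{\varphi\preceq u}=\{x\in X:\varphi(x)\preceq u\}$. $G\subseteq\operatorname{Homeo}(X)$ acts on $S(X)$ by $g(\sigma)=g\circ\sigma$ on singular simplices, extended linearly. A $G$-chain subcomplex $\bar C$ of $S(X)$ is a chain subcomplex such that each $g\in G$ restricts to a chain isomorphism $\bar C\to\bar C$. For a subspace $Y\subseteq X$, $\bar C\cap S(Y)$ denotes the chain complex whose $n$-chains are the singular $n$-chains in $Y$ belonging to $\bar C_n$. Property $( * )$: whenever $X',X''$ are closed subsets of $X$ with $X'\subseteq\operatorname{int}(X'')$, there is a subspace $\hat X$ with $X'\subseteq\hat X\subseteq X''$ such that $H_n(\bar C\cap S(\hat X))$ is finitely generated for every $n\ge 0$. Induced filtering function: $\bar\varphi(0)=(-\infty,\ldots,-\infty)$; for a non-null chain $c=\sum_{r=1}^m a^r\sigma_{j_r}$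 written in reduced form (distinct singular simplices, all $a^r\neq0$), $\bar\varphi(c)=(u_1,\ldots,u_k)$ where $u_i$ is the maximum of $\varphi_i$ on $\bigcup_r\sigma_{j_r}(\Delta_n)$. For $u\prec v$, $\rho^{\bar\varphi}_n(u,v)$ is the rank of the image of $H_n(\bar C^{\bar\varphi\preceq u})\to H_n(\bar C^{\bar\varphi\preceq v})$ induced by inclusion, where $\bar C^{\bar\varphi\preceq u}_n=\{c\in\bar C_n:\bar\varphi(c)\preceq u\}$ (equivalently $\bar C\cap S(X^{\varphi\preceq u})$). *)

theory Defs
  imports "HOL-Analysis.Analysis"
begin

definition triangulable_by :: "'b::euclidean_space set set \<Rightarrow> 'a topology \<Rightarrow> bool" where
  "triangulable_by K X \<equiv> simplicial_complex K \<and> X homeomorphic_space (subtopology euclidean (\<Union>K))"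

text \<open>Maps are compared on the underlying space only.\<close>
definition homeo_subgroup :: "'a topology \<Rightarrow> ('a \<Rightarrow> 'a) set \<Rightarrow> bool" where
  "homeo_subgroup X G \<equiv>
     (\<forall>g\<in>G. homeomorphic_map X X g)
   \<and> (\<exists>e\<in>G. \<forall>x\<in>topspace X. e x = x)
   \<and> (\<forall>g\<in>G. \<forall>h\<in>G. \<exists>k\<in>G. \<forall>x\<in>topspace X. k x = g (h x))
   \<and> (\<forall>g\<in>G. \<exists>h\<in>G. \<forall>x\<in>topspace X. h (g x) = x)"

definition std_simplex :: "nat \<Rightarrow> (nat \<Rightarrow> real) set" where
  "std_simplex p \<equiv>
    {x. (\<forall>i. 0 \<le> x i \<and> x i \<le> 1) \<and> (\<forall>i>p. x i = 0) \<and> (\<Sum>i\<le>p. x i) = 1}"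

definition sing_simplex :: "nat \<Rightarrow> 'a topology \<Rightarrow> ((nat \<Rightarrow> real) \<Rightarrow> 'a) \<Rightarrow> bool" where
  "sing_simplex p X f \<equiv>
      continuous_map (subtopology (powertop_real UNIV) (std_simplex p)) X f
    \<and> f \<in> extensional (std_simplex p)"

definition simp_face :: "nat \<Rightarrow> (nat \<Rightarrow> real) \<Rightarrow> nat \<Rightarrow> real" where
  "simp_face k x \<equiv> \<lambda>i. if i < k then x i else if i = k then 0 else x (i - 1)"

definition sing_face :: "nat \<Rightarrow> nat \<Rightarrow> ((nat \<Rightarrow> real) \<Rightarrow> 'a) \<Rightarrow> ((nat \<Rightarrow> real) \<Rightarrow> 'a)" where
  "sing_face p k f \<equiv> restrict (f \<circ> simp_face k) (std_simplex (p - 1))"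

type_synonym ('a, 'f) chain = "((nat \<Rightarrow> real) \<Rightarrow> 'a) \<Rightarrow> 'f"

definition supp :: "('a, 'f::zero) chain \<Rightarrow> ((nat \<Rightarrow> real) \<Rightarrow> 'a) set" where
  "supp c = {\<sigma>. c \<sigma> \<noteq> 0}"

text \<open>Singular n-chains with coefficients in the field 'f (n an integer; there are no
  simplices in negative degree, so those chain groups are zero).\<close>
definition chains :: "'a topology \<Rightarrow> int \<Rightarrow> ('a, 'f::field) chain set" where
  "chains X n = {c. finite (supp c) \<and> (\<forall>\<sigma>\<in>supp c. n \<ge> 0 \<and> sing_simplex (nat n) X \<sigma>)}"

definition bd :: "int \<Rightarrow> ('a, 'f::field) chain \<Rightarrow> ('a, 'f) chain" where
  "bd n c = (if n \<le> 0 then (\<lambda>_. 0) else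
     (\<lambda>\<tau>. \<Sum>\<sigma>\<in>supp c. c \<sigma> *
        (\<Sum>k\<in>{0..nat n}. if sing_face (nat n) k \<sigma> = \<tau> then (-1) ^ k else 0)))"

text \<open>Action of a homeomorphism on n-chains: g(\<sigma>) = g \<circ> \<sigma>, extended linearly.\<close>
definition push :: "int \<Rightarrow> ('a \<Rightarrow> 'a) \<Rightarrow> ('a, 'f::field) chain \<Rightarrow> ('a, 'f) chain" where
  "push n g c = (\<lambda>\<tau>. \<Sum>\<sigma>\<in>{\<sigma>\<in>supp c. restrict (g \<circ> \<sigma>) (std_simplex (nat n)) = \<tau>}. c \<sigma>)"

definition lin_span :: "('a, 'f::field) chain set \<Rightarrow> ('a, 'f) chain set" where
  "lin_span S = {c. \<exists>T a. finite T \<and> T \<subseteq> S \<and> c = (\<lambda>\<sigma>. \<Sum>s\<in>T. a s * s \<sigma>)}"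

definition is_subspace :: "('a, 'f::field) chain set \<Rightarrow> bool" where
  "is_subspace V \<longleftrightarrow> (\<lambda>_. 0) \<in> V \<and> (\<forall>x\<in>V. \<forall>y\<in>V. (\<lambda>\<sigma>. x \<sigma> + y \<sigma>) \<in> V)
      \<and> (\<forall>a. \<forall>x\<in>V. (\<lambda>\<sigma>. a * x \<sigma>) \<in> V)"

text \<open>G-chain subcomplex of S(X): a chain subcomplex such that each g in G restricts to a
  chain isomorphism of it (the pushforward is injective and commutes with the boundary,
  so this amounts to g mapping each C n onto C n).\<close>
definition G_chain_subcomplex :: "'a topology \<Rightarrow> ('a \<Rightarrow> 'a) set \<Rightarrow> (int \<Rightarrow> ('a, 'f::field) chain set) \<Rightarrow> bool" where
  "G_chain_subcomplex X G C \<longleftrightarrow>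
     (\<forall>n. C n \<subseteq> chains X n \<and> is_subspace (C n))
   \<and> (\<forall>n. \<forall>c\<in>C n. bd n c \<in> C (n - 1))
   \<and> (\<forall>g\<in>G. \<forall>n. push n g ` C n = C n)"

definition cycles :: "(int \<Rightarrow> ('a, 'f::field) chain set) \<Rightarrow> int \<Rightarrow> ('a, 'f) chain set" where
  "cycles D n = {c\<in>D n. bd n c = (\<lambda>_. 0)}"

definition bdries :: "(int \<Rightarrow> ('a, 'f::field) chain set) \<Rightarrow> int \<Rightarrow> ('a, 'f) chain set" where
  "bdries D n = bd (n + 1) ` D (n + 1)"

definition restr_cx :: "(int \<Rightarrow> ('a, 'f::field) chain set) \<Rightarrow> 'a set \<Rightarrow> int \<Rightarrow> ('a, 'f) chain set" where
  "restr_cx C Y n = {c\<in>C n. \<forall>\<sigma>\<in>supp c. \<sigma> ` std_simplex (nat n) \<subseteq> Y}"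

text \<open>H_n(D) = cycles/boundaries is finitely generated (finite-dimensional over the field):
  finitely many cycles whose classes span H_n(D).\<close>
definition homology_fg :: "(int \<Rightarrow> ('a, 'f::field) chain set) \<Rightarrow> int \<Rightarrow> bool" where
  "homology_fg D n \<longleftrightarrow> (\<exists>S. finite S \<and> S \<subseteq> cycles D n \<and> cycles D n \<subseteq> lin_span (S \<union> bdries D n))"

definition property_star :: "'a topology \<Rightarrow> (int \<Rightarrow> ('a, 'f::field) chain set) \<Rightarrow> bool" where
  "property_star X C \<longleftrightarrow>
    (\<forall>X' X''. closedin X X' \<and> closedin X X'' \<and> X' \<subseteq> X interior_of X'' \<longrightarrow>
       (\<exists>Y. X' \<subseteq> Y \<and> Y \<subseteq> X'' \<and> (\<forall>n\<ge>0. homology_fg (restr_cx C Y) n)))"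

text \<open>The filtering function induced by \<phi> on n-chains; componentwise maximum (= supremum,
  the image being compact) over the union of the images of the simplices in the reduced
  form of c; (-\<infinity>,...,-\<infinity>) on the null chain.\<close>
definition phibar :: "('a \<Rightarrow> real^'k) \<Rightarrow> int \<Rightarrow> ('a, 'f::field) chain \<Rightarrow> ereal^'k" where
  "phibar \<phi> n c = (if c = (\<lambda>_. 0) then (\<chi> j. -\<infinity>) else
     (\<chi> j. Sup ((\<lambda>x. ereal (\<phi> x $ j)) ` (\<Union>\<sigma>\<in>supp c. \<sigma> ` std_simplex (nat n)))))"

definition sublevel_cx :: "(int \<Rightarrow> ('a, 'f::field) chain set) \<Rightarrow> ('a \<Rightarrow> real^'k) \<Rightarrow> real^'k
     \<Rightarrow> int \<Rightarrow> ('a, 'f) chain set" where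
  "sublevel_cx C \<phi> u n = {c\<in>C n. \<forall>j. phibar \<phi> n c $ j \<le> ereal (u $ j)}"

text \<open>Rank of the image of H_n(C^u) \<rightarrow> H_n(C^v): the image is spanned by the classes of
  cycles of C^u modulo boundaries of C^v; its dimension is the least number of cycles of
  C^u whose classes span it (\<infinity> if no finite such set exists).\<close>
definition pbn :: "(int \<Rightarrow> ('a, 'f::field) chain set) \<Rightarrow> ('a \<Rightarrow> real^'k) \<Rightarrow> int
     \<Rightarrow> real^'k \<Rightarrow> real^'k \<Rightarrow> enat" where
  "pbn C \<phi> n u v = (INF S\<in>{S. finite S \<and> S \<subseteq> cycles (sublevel_cx C \<phi> u) n
        \<and> cycles (sublevel_cx C \<phi> u) n \<subseteq> lin_span (S \<union> bdries (sublevel_cx C \<phi> v) n)}.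
        enat (card S))"

end

theory Submission imports Defs "HOL-Library.Function_Algebras"
begin

text \<open>The sublevel set of \<phi> at u is closed and contained in the open strict sublevel set at v,
  hence in the interior of the sublevel set at v. Property (*) therefore yields a subspace Y
  between the two sublevel sets with H_n(C \<inter> S(Y)) finite-dimensional. The map
  H_n(C^u) \<rightarrow> H_n(C^v) factors through H_n(C \<inter> S(Y)), so its image is finite-dimensional.\<close>

lemma (in vector_space) finite_spanning_subset_mod:
  assumes "finite T" and "Z \<subseteq> span (T \<union> B)"
  shows "\<exists>S. finite S \<and> S \<subseteq> Z \<and> Z \<subseteq> span (S \<union> B)"
  using assms
proof (induction T arbitrary: B rule: finite_induct)
  case empty
  then show ?case by (intro exI[of _ "{}"]) simp
next
  case (insert s T)
  show ?case
  proof (cases "Z \<subseteq> span (T \<union> B)")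
    case True
    then show ?thesis by (rule insert.IH)
  next
    case False
    \<comment> \<open>Exchange s for a vector z of Z outside span (T \<union> B) and move z into B.\<close>
    then obtain z where z: "z \<in> Z" "z \<notin> span (T \<union> B)" by blast
    have "z \<in> span (insert s (T \<union> B))" using insert.prems z(1) by auto
    then have s: "s \<in> span (insert z (T \<union> B))" using in_span_insert z(2) by blast
    have "Z \<subseteq> span (T \<union> insert z B)"
    proof
      fix w assume "w \<in> Z"
      then have "w \<in> span (insert s (T \<union> B))" using insert.prems by auto
      then have "w \<in> span (insert s (insert z (T \<union> B)))"
        using span_mono[of "insert s (T \<union> B)" "insert s (insert z (T \<union> B))"] by blast
      then have "w \<in> span (insert z (T \<union> B))" using span_trans s by blast
      then show "w \<in> span (T \<union> insert z B)" by simp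
    qed
    then obtain S where S: "finite S" "S \<subseteq> Z" "Z \<subseteq> span (S \<union> insert z B)"
      by (blast dest: insert.IH)
    show ?thesis using S z(1) by (intro exI[of _ "insert z S"]) simp
  qed
qed

lemma sum_fun_apply: "(\<Sum>s\<in>T. f s) x = (\<Sum>s\<in>T. f s x)"
  for f :: "'c \<Rightarrow> 'b \<Rightarrow> 'f::comm_monoid_add"
  by (induction T rule: infinite_finite_induct) auto

interpretation chain_space: vector_space "\<lambda>(a::'f::field) (c::'b \<Rightarrow> 'f). (\<lambda>\<sigma>. a * c \<sigma>)"
  by unfold_locales (auto simp: fun_eq_iff algebra_simps)

lemma lin_span_eq_span: "lin_span S = chain_space.span S"
  unfolding lin_span_def chain_space.span_explicit
  by (auto simp: sum_fun_apply fun_eq_iff)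

lemma pbn_finite_if_spanned:
  assumes "finite S" "S \<subseteq> cycles (sublevel_cx C \<phi> u) n"
    and "cycles (sublevel_cx C \<phi> u) n \<subseteq> lin_span (S \<union> bdries (sublevel_cx C \<phi> v) n)"
  shows "pbn C \<phi> n u v \<noteq> \<infinity>"
proof -
  have "pbn C \<phi> n u v \<le> enat (card S)"
    unfolding pbn_def using assms by (intro INF_lower) auto
  then show ?thesis by (cases "pbn C \<phi> n u v") auto
qed

lemma image_homology_fg_if_factors:
  assumes fg: "homology_fg D n"
    and "D1 n \<subseteq> D n" and "D (n + 1) \<subseteq> D2 (n + 1)"
  shows "\<exists>S. finite S \<and> S \<subseteq> cycles D1 n \<and> cycles D1 n \<subseteq> lin_span (S \<union> bdries D2 n)"
proof -
  obtain T where T: "finite T" "cycles D n \<subseteq> lin_span (T \<union> bdries D n)"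
    using fg unfolding homology_fg_def by blast
  have "cycles D1 n \<subseteq> cycles D n" using assms(2) by (auto simp: cycles_def)
  moreover have "bdries D n \<subseteq> bdries D2 n" using assms(3) by (auto simp: bdries_def)
  ultimately have "cycles D1 n \<subseteq> chain_space.span (T \<union> bdries D2 n)"
    using T(2) chain_space.span_mono[of "T \<union> bdries D n" "T \<union> bdries D2 n"]
    by (auto simp: lin_span_eq_span)
  then show ?thesis
    using chain_space.finite_spanning_subset_mod[OF T(1)] by (simp add: lin_span_eq_span)
qed

definition sublevel_set :: "('a \<Rightarrow> real^'k) \<Rightarrow> real^'k \<Rightarrow> 'a set" where
  "sublevel_set \<phi> u = {x. \<forall>j. \<phi> x $ j \<le> u $ j}"

lemma phibar_le_iff:
  "phibar \<phi> n c $ j \<le> ereal r \<longleftrightarrow> (\<forall>\<sigma>\<in>supp c. \<forall>x\<in>std_simplex (nat n). \<phi> (\<sigma> x) $ j \<le> r)"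
proof (cases "c = (\<lambda>_. 0)")
  case True
  then show ?thesis by (simp add: phibar_def supp_def)
next
  case False
  then show ?thesis by (auto simp: phibar_def Sup_le_iff)
qed

lemma sublevel_cx_eq_restr_cx: "sublevel_cx C \<phi> u n = restr_cx C (sublevel_set \<phi> u) n"
  by (auto simp: sublevel_cx_def restr_cx_def sublevel_set_def phibar_le_iff)

lemma restr_cx_mono:
  assumes "C n \<subseteq> chains X n" and "A \<inter> topspace X \<subseteq> B"
  shows "restr_cx C A n \<subseteq> restr_cx C B n"
proof
  fix c assume c: "c \<in> restr_cx C A n"
  have "\<sigma> ` std_simplex (nat n) \<subseteq> topspace X" if "\<sigma> \<in> supp c" for \<sigma>
  proof -
    have "sing_simplex (nat n) X \<sigma>" using c that assms(1) by (auto simp: restr_cx_def chains_def)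
    then have "continuous_map (subtopology (powertop_real UNIV) (std_simplex (nat n))) X \<sigma>"
      unfolding sing_simplex_def by blast
    from continuous_map_image_subset_topspace[OF this] show ?thesis by simp
  qed
  moreover have "\<sigma> ` std_simplex (nat n) \<subseteq> A" if "\<sigma> \<in> supp c" for \<sigma>
    using c that by (simp add: restr_cx_def)
  ultimately have "\<sigma> ` std_simplex (nat n) \<subseteq> B" if "\<sigma> \<in> supp c" for \<sigma>
    using that assms(2) by blast
  then show "c \<in> restr_cx C B n" using c by (simp add: restr_cx_def)
qed

lemma sublevel_subset_interior_of_sublevel:
  fixes \<phi> :: "'a \<Rightarrow> real^'k"
  assumes "continuous_map X euclidean \<phi>" and "\<forall>j. u $ j < v $ j"
  shows "topspace X \<inter> sublevel_set \<phi> u \<subseteq> X interior_of (topspace X \<inter> sublevel_set \<phi> v)"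
proof -
  let ?U = "{x \<in> topspace X. \<phi> x \<in> (\<Inter>j. {y. y $ j < v $ j})}"
  have "open (\<Inter>j. {y::real^'k. y $ j < v $ j})"
    by (intro open_INT finite allI ballI open_Collect_less
        continuous_on_const continuous_on_component continuous_on_id)
  then have "openin X ?U"
    by (intro openin_continuous_map_preimage[OF assms(1)]) simp
  moreover have "?U \<subseteq> topspace X \<inter> sublevel_set \<phi> v"
    by (auto simp: sublevel_set_def less_imp_le)
  ultimately have "?U \<subseteq> X interior_of (topspace X \<inter> sublevel_set \<phi> v)"
    by (simp add: interior_of_maximal)
  moreover have "topspace X \<inter> sublevel_set \<phi> u \<subseteq> ?U"
    using assms(2) by (auto simp: sublevel_set_def intro: le_less_trans)
  ultimately show ?thesis by blast
qed

lemma closedin_sublevel_set: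
  fixes \<phi> :: "'a \<Rightarrow> real^'k"
  assumes "continuous_map X euclidean \<phi>"
  shows "closedin X (topspace X \<inter> sublevel_set \<phi> u)"
proof -
  have "closed {y::real^'k. \<forall>j. y $ j \<le> u $ j}"
    by (intro closed_Collect_all allI closed_Collect_le
        continuous_on_const continuous_on_component continuous_on_id)
  then have "closedin X {x \<in> topspace X. \<phi> x \<in> {y. \<forall>j. y $ j \<le> u $ j}}"
    by (intro closedin_continuous_map_preimage[OF assms]) simp
  then show ?thesis by (simp add: sublevel_set_def Int_def)
qed

lemma cycles_negative_degree:
  assumes "C n \<subseteq> chains X n" and "n < 0"
  shows "cycles C n \<subseteq> {\<lambda>_. 0}"
  using assms by (auto simp: cycles_def chains_def supp_def fun_eq_iff)

theorem mainTheorem2: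
  fixes X :: "'a topology" and K :: "('m::euclidean_space) set set"
    and G :: "('a \<Rightarrow> 'a) set" and \<phi> :: "'a \<Rightarrow> real^'k"
    and C :: "int \<Rightarrow> ('a, 'f::field) chain set"
    and n :: int and u v :: "real^'k"
  assumes "triangulable_by K X"
    and "homeo_subgroup X G"
    and "continuous_map X euclidean \<phi>"
    and "G_chain_subcomplex X G C"
    and "property_star X C"
    and "\<forall>j. u $ j < v $ j"
  shows "pbn C \<phi> n u v \<noteq> \<infinity>"
proof -
  have C_chains: "C m \<subseteq> chains X m" for m
    using assms(4) unfolding G_chain_subcomplex_def by auto
  show ?thesis
  proof (cases "n < 0")
    case True
    have "cycles (sublevel_cx C \<phi> u) n \<subseteq> {\<lambda>_. 0}"
      using C_chains True by (intro cycles_negative_degree) (auto simp: sublevel_cx_def)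
    then have "cycles (sublevel_cx C \<phi> u) n \<subseteq> lin_span ({} \<union> bdries (sublevel_cx C \<phi> v) n)"
      using chain_space.span_zero by (auto simp: lin_span_eq_span zero_fun_def)
    then show ?thesis by (intro pbn_finite_if_spanned[of "{}"]) auto
  next
    case False
    let ?Xu = "topspace X \<inter> sublevel_set \<phi> u" and ?Xv = "topspace X \<inter> sublevel_set \<phi> v"
    have "\<exists>Y. ?Xu \<subseteq> Y \<and> Y \<subseteq> ?Xv \<and> (\<forall>m\<ge>0. homology_fg (restr_cx C Y) m)"
      using assms(5)[unfolded property_star_def, rule_format, of ?Xu ?Xv]
        closedin_sublevel_set[OF assms(3)] sublevel_subset_interior_of_sublevel[OF assms(3,6)]
      by simp
    then obtain Y where Y: "?Xu \<subseteq> Y" "Y \<subseteq> ?Xv" "\<forall>m\<ge>0. homology_fg (restr_cx C Y) m"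
      by (elim exE conjE) simp
    have "sublevel_cx C \<phi> u n \<subseteq> restr_cx C Y n"
      unfolding sublevel_cx_eq_restr_cx using Y(1) by (intro restr_cx_mono[OF C_chains]) auto
    moreover have "restr_cx C Y (n + 1) \<subseteq> sublevel_cx C \<phi> v (n + 1)"
      unfolding sublevel_cx_eq_restr_cx using Y(2) by (intro restr_cx_mono[OF C_chains]) auto
    moreover have "homology_fg (restr_cx C Y) n" using Y(3) False by simp
    ultimately show ?thesis
      using image_homology_fg_if_factors pbn_finite_if_spanned by meson
  qed
qed

end
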